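(* Let $X$ be a Hausdorff topological space, $\Phi$ a local semiflow on $X$, and $\mathscr A$ an attractor of $\Phi$ with region of attraction $\Omega=\Omega(\mathscr A)$. Assume $\mathscr A$ is closed and has a $\mathcal K_0$ function $\zeta$ on $\Omega$. Then $\mathscr A$ has a Lyapunov function $L$ on $\Omega$. If in addition $X$ is normal, then for any closed subset $K$ of $X$ with $K\subset\Omega\setminus\mathscr A$, there exists a Lyapunov function $L$ of $\mathscr A$ such that $L(x)\ge1$ for all $x\in K$.
   Context: A local semiflow $\Phi$ on $X$ is a continuous map from an open subset $\mathcal D_\Phi\subset\mathbb R^+\times X$ to $X$ such that: (i) for each $x$ there is $T_x\in(0,\infty]$ with $(t,x)\in\mathcal D_\Phi$ iff $t\in[0,T_x)$; (ii) $\Phi(0,x)=x$; (iii) if $(t+s,x)\in\mathcal D_\Phi$ with $t,s\ge0$ then $\Phi(t+s,x)=\Phi(t,\Phi(s,x))$. Write $\Phi(t)x=\Phi(t,x)$, $\Phi(t)M=\{\Phi(t)x:x\in M,\ t<T_x\}$. Convention: $U$ is a neighborhood of $A$ if $\overline A\subset\mathrm{int}\,U$. A set $K$ is invariant if $\Phi(t)K\subset K$ and $K\subset\Phi(t)K$ for all $t\ge0$. $K$ attracts $B$ if $T_x=\infty$ for all $x\in B$ and for every neighborhood $V$ of $K$ there is $t_0>0$ with $\Phi(t)B\subset V$ for all $t>t_0$. A set is s-compact if every sequence in it has a subsequence converging to a point of the set. An attractor is a nonempty s-compact invariant set $\mathscr A$ for which there is a neighborhood $N$ of $\mathscr A$ such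 that $\mathscr A$ attracts $N$ and every s-compact invariant subset of $N$ is contained in $\mathscr A$; $\Omega(\mathscr A)=\{x:\mathscr A\text{ attracts }\{x\}\}$. A $\mathcal K_0$ function of $\mathscr A$ is a nonnegative continuous function $\zeta$ on $\Omega$ with $\zeta(x)=0\iff x\in\mathscr A$. A Lyapunov function of $\mathscr A$ is a $\mathcal K_0$ function $L$ of $\mathscr A$ with $L(\Phi(t)x)<L(x)$ for all $x\in\Omega\setminus\mathscr A$ and $t>0$. *)

theory Defs
  imports "HOL-Analysis.Analysis"
begin

definition local_semiflow :: "'a topology \<Rightarrow> (real \<times> 'a) set \<Rightarrow> (real \<Rightarrow> 'a \<Rightarrow> 'a) \<Rightarrow> bool" where
  "local_semiflow X D Phi \<longleftrightarrow>
     D \<subseteq> {0..} \<times> topspace X \<and>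
     openin (prod_topology (subtopology euclideanreal {0..}) X) D \<and>
     continuous_map (subtopology (prod_topology euclideanreal X) D) X (\<lambda>(t, x). Phi t x) \<and>
     (\<forall>x\<in>topspace X. (\<exists>T>0. {t. (t, x) \<in> D} = {0..<T}) \<or> {t. (t, x) \<in> D} = {0..}) \<and>
     (\<forall>x\<in>topspace X. Phi 0 x = x) \<and>
     (\<forall>x t s. 0 \<le> t \<and> 0 \<le> s \<and> (t + s, x) \<in> D \<longrightarrow>
        (t, Phi s x) \<in> D \<and> Phi (t + s) x = Phi t (Phi s x))"

definition flow_image :: "(real \<times> 'a) set \<Rightarrow> (real \<Rightarrow> 'a \<Rightarrow> 'a) \<Rightarrow> real \<Rightarrow> 'a set \<Rightarrow> 'a set" where
  "flow_image D Phi t M = {Phi t x | x. x \<in> M \<and> (t, x) \<in> D}"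

definition sf_invariant :: "(real \<times> 'a) set \<Rightarrow> (real \<Rightarrow> 'a \<Rightarrow> 'a) \<Rightarrow> 'a set \<Rightarrow> bool" where
  "sf_invariant D Phi K \<longleftrightarrow>
     (\<forall>t\<ge>0. flow_image D Phi t K \<subseteq> K \<and> K \<subseteq> flow_image D Phi t K)"

definition nbhd_of :: "'a topology \<Rightarrow> 'a set \<Rightarrow> 'a set \<Rightarrow> bool" where
  "nbhd_of X A U \<longleftrightarrow> U \<subseteq> topspace X \<and> X closure_of A \<subseteq> X interior_of U"

definition sf_attracts :: "'a topology \<Rightarrow> (real \<times> 'a) set \<Rightarrow> (real \<Rightarrow> 'a \<Rightarrow> 'a) \<Rightarrow> 'a set \<Rightarrow> 'a set \<Rightarrow> bool" where
  "sf_attracts X D Phi K B \<longleftrightarrow>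
     (\<forall>x\<in>B. \<forall>t\<ge>0. (t, x) \<in> D) \<and>
     (\<forall>V. nbhd_of X K V \<longrightarrow> (\<exists>t0>0. \<forall>t>t0. flow_image D Phi t B \<subseteq> V))"

definition s_compact :: "'a topology \<Rightarrow> 'a set \<Rightarrow> bool" where
  "s_compact X K \<longleftrightarrow>
     (\<forall>\<sigma>::nat \<Rightarrow> 'a. (\<forall>n. \<sigma> n \<in> K) \<longrightarrow>
        (\<exists>r y. strict_mono r \<and> y \<in> K \<and> limitin X (\<sigma> \<circ> r) y sequentially))"

definition is_attractor :: "'a topology \<Rightarrow> (real \<times> 'a) set \<Rightarrow> (real \<Rightarrow> 'a \<Rightarrow> 'a) \<Rightarrow> 'a set \<Rightarrow> bool" where
  "is_attractor X D Phi A \<longleftrightarrow>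
     A \<noteq> {} \<and> A \<subseteq> topspace X \<and> s_compact X A \<and> sf_invariant D Phi A \<and>
     (\<exists>N. nbhd_of X A N \<and> sf_attracts X D Phi A N \<and>
        (\<forall>K. K \<subseteq> N \<and> s_compact X K \<and> sf_invariant D Phi K \<longrightarrow> K \<subseteq> A))"

definition attr_region :: "'a topology \<Rightarrow> (real \<times> 'a) set \<Rightarrow> (real \<Rightarrow> 'a \<Rightarrow> 'a) \<Rightarrow> 'a set \<Rightarrow> 'a set" where
  "attr_region X D Phi A = {x \<in> topspace X. sf_attracts X D Phi A {x}}"

definition K0_function :: "'a topology \<Rightarrow> (real \<times> 'a) set \<Rightarrow> (real \<Rightarrow> 'a \<Rightarrow> 'a) \<Rightarrow> 'a set \<Rightarrow> ('a \<Rightarrow> real) \<Rightarrow> bool" where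
  "K0_function X D Phi A \<zeta> \<longleftrightarrow>
     continuous_map (subtopology X (attr_region X D Phi A)) euclideanreal \<zeta> \<and>
     (\<forall>x\<in>attr_region X D Phi A. 0 \<le> \<zeta> x \<and> (\<zeta> x = 0 \<longleftrightarrow> x \<in> A))"

definition Lyapunov_function :: "'a topology \<Rightarrow> (real \<times> 'a) set \<Rightarrow> (real \<Rightarrow> 'a \<Rightarrow> 'a) \<Rightarrow> 'a set \<Rightarrow> ('a \<Rightarrow> real) \<Rightarrow> bool" where
  "Lyapunov_function X D Phi A L \<longleftrightarrow>
     K0_function X D Phi A L \<and>
     (\<forall>x\<in>attr_region X D Phi A - A. \<forall>t>0. L (Phi t x) < L x)"

end

theory Submission
  imports Defs
begin

text \<open>
  Put \<open>L x = (SUP t\<ge>0. k t * \<zeta> (\<Phi> t x))\<close> with the weight \<open>k t = 2 - 1 / (1 + t)\<close>, which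
  increases strictly from 1 to 2. Since the attractor attracts a neighbourhood \<open>N\<close> uniformly,
  \<open>\<zeta>\<close> becomes small along all orbits through points near \<open>x\<close> after one common time \<open>T\<close>.
  Hence \<open>L\<close> is finite, \<open>\<zeta> \<le> L\<close>, and up to \<open>\<epsilon>\<close> the supremum only sees the compact
  time interval \<open>[0, T]\<close>, which makes \<open>L\<close> continuous. Moving along the orbit by \<open>s > 0\<close>
  replaces the weight \<open>k (t + s)\<close> by \<open>k t\<close>, which is smaller by a fixed factor on \<open>[0, T]\<close>,
  while the tail contributes less than \<open>\<zeta> x / 2\<close>; so \<open>L (\<Phi> s x) < L x\<close> off the attractor.
  For the second claim apply this to \<open>\<zeta> + f\<close>, where the Urysohn function \<open>f\<close> is 0 on the
  attractor and 1 on \<open>K\<close>.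
\<close>

lemma continuous_map_real_epsilon:
  fixes f :: "'a \<Rightarrow> real"
  assumes "\<And>x e. x \<in> topspace Y \<Longrightarrow> e > 0 \<Longrightarrow>
             \<exists>W. openin Y W \<and> x \<in> W \<and> (\<forall>y\<in>W. \<bar>f y - f x\<bar> < e)"
  shows "continuous_map Y euclideanreal f"
proof -
  have "continuous_map Y Met_TC.mtopology f"
    unfolding Met_TC.continuous_map_to_metric
    using assms by (fastforce simp: dist_real_def abs_minus_commute)
  then show ?thesis by simp
qed

lemma nbhd_of_openin:
  assumes "closedin X A" "openin X V" "A \<subseteq> V"
  shows "nbhd_of X A V"
  using assms closure_of_eq[of X A] by (simp add: nbhd_of_def openin_subset interior_of_openin)

lemma flow_image_singleton: "(t, x) \<in> D \<Longrightarrow> flow_image D Phi t {x} = {Phi t x}"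
  by (auto simp: flow_image_def)

lemma flow_image_mono: "M \<subseteq> M' \<Longrightarrow> flow_image D Phi t M \<subseteq> flow_image D Phi t M'"
  by (auto simp: flow_image_def)


subsection \<open>Weighted orbit suprema\<close>

definition orbit_weight :: "real \<Rightarrow> real" where
  "orbit_weight t = 2 - 1 / (1 + t)"

lemma orbit_weight_bounds: "0 \<le> t \<Longrightarrow> 1 \<le> orbit_weight t \<and> orbit_weight t \<le> 2"
  by (simp add: orbit_weight_def)

lemma orbit_weight_0 [simp]: "orbit_weight 0 = 1"
  by (simp add: orbit_weight_def)

lemma orbit_weight_shift_le:
  assumes "0 \<le> t" "0 < s" "t + s \<le> T"
  shows "orbit_weight t \<le> (1 - s / (2 * (1 + T + s)^2)) * orbit_weight (t + s)"
proof -
  have increment: "orbit_weight (t + s) - orbit_weight t = s / ((1 + t) * (1 + t + s))"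
    using assms by (simp add: orbit_weight_def field_simps)
  have "(1 + t) * (1 + t + s) \<le> (1 + T + s)^2"
    using assms by (simp add: power2_eq_square mult_mono)
  then have "s / (1 + T + s)^2 \<le> s / ((1 + t) * (1 + t + s))"
    using assms by (intro divide_left_mono) auto
  moreover have "orbit_weight (t + s) * (s / (2 * (1 + T + s)^2)) \<le> s / (1 + T + s)^2"
  proof -
    have "orbit_weight (t + s) * (s / (2 * (1 + T + s)^2)) \<le> 2 * (s / (2 * (1 + T + s)^2))"
      using orbit_weight_bounds[of "t + s"] assms by (intro mult_right_mono) auto
    then show ?thesis by simp
  qed
  moreover have "s / (2 * (1 + T + s)^2) = (s / (1 + T + s)^2) / 2" by simp
  ultimately show ?thesis
    using increment by (smt (verit, best) right_diff_distrib mult.commute mult_cancel_right1)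
qed

lemma orbit_weight_shift_contraction:
  assumes "0 < s" "0 \<le> T"
  obtains q where "0 \<le> q" "q < 1"
    "\<And>t. 0 \<le> t \<Longrightarrow> t + s \<le> T \<Longrightarrow> orbit_weight t \<le> q * orbit_weight (t + s)"
proof
  have "s \<le> 1 + T + s" using assms by simp
  also have "\<dots> \<le> (1 + T + s)^2" using assms by (simp add: power2_eq_square)
  finally have "s \<le> (1 + T + s)^2" .
  then show "0 \<le> 1 - s / (2 * (1 + T + s)^2)"
    using assms by (simp add: divide_le_eq)
  show "1 - s / (2 * (1 + T + s)^2) < 1"
    using assms by (simp add: add_pos_nonneg)
qed (use orbit_weight_shift_le assms in auto)

definition sup_weighted_orbit :: "(real \<Rightarrow> 'a \<Rightarrow> 'a) \<Rightarrow> ('a \<Rightarrow> real) \<Rightarrow> 'a \<Rightarrow> real" where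
  "sup_weighted_orbit Phi z y = (SUP t\<in>{0..}. orbit_weight t * z (Phi t y))"


lemma local_semiflow_topspace:
  assumes "local_semiflow X D Phi" "(t, x) \<in> D"
  shows "Phi t x \<in> topspace X"
proof -
  have cont: "continuous_map (subtopology (prod_topology euclideanreal X) D) X (\<lambda>(t, x). Phi t x)"
    and "D \<subseteq> {0..} \<times> topspace X"
    using assms(1) by (auto simp: local_semiflow_def)
  then have "(t, x) \<in> topspace (subtopology (prod_topology euclideanreal X) D)"
    using assms(2) by auto
  then show ?thesis
    using continuous_map_image_subset_topspace[OF cont] by force
qed

lemma local_semiflow_0:
  assumes "local_semiflow X D Phi" "x \<in> topspace X"
  shows "Phi 0 x = x"
proof -
  have "\<forall>x\<in>topspace X. Phi 0 x = x"
    using assms(1) unfolding local_semiflow_def by (elim conjE)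
  then show ?thesis using assms(2) by blast
qed

lemma local_semiflow_continuous_on_product:
  assumes "local_semiflow X D Phi" "S \<times> M \<subseteq> D"
  shows "continuous_map (prod_topology (top_of_set S) (subtopology X M)) X (\<lambda>w. Phi (fst w) (snd w))"
proof -
  have "continuous_map (subtopology (prod_topology euclideanreal X) D) X (\<lambda>(t, x). Phi t x)"
    using assms(1) by (auto simp: local_semiflow_def)
  then have "continuous_map (subtopology (prod_topology euclideanreal X) (S \<times> M)) X (\<lambda>(t, x). Phi t x)"
    using continuous_map_from_subtopology_mono assms(2) by blast
  then show ?thesis
    by (simp add: subtopology_Times case_prod_unfold)
qed


subsection \<open>Construction of the Lyapunov function\<close>

locale attractor_with_K0 =
  fixes X :: "'a topology" and D :: "(real \<times> 'a) set" and Phi :: "real \<Rightarrow> 'a \<Rightarrow> 'a"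
    and A :: "'a set" and z :: "'a \<Rightarrow> real" and N :: "'a set"
  assumes semiflow: "local_semiflow X D Phi"
    and closed: "closedin X A"
    and K0: "K0_function X D Phi A z"
    and nbhd_N: "nbhd_of X A N"
    and attracts_N: "sf_attracts X D Phi A N"
    and invariant: "sf_invariant D Phi A"
begin

abbreviation \<Omega> where "\<Omega> \<equiv> attr_region X D Phi A"
abbreviation U where "U \<equiv> X interior_of N"
abbreviation L where "L \<equiv> sup_weighted_orbit Phi z"

lemma attr_region_defined: "x \<in> \<Omega> \<Longrightarrow> 0 \<le> t \<Longrightarrow> (t, x) \<in> D"
  by (auto simp: attr_region_def sf_attracts_def)

lemma attr_region_subset: "\<Omega> \<subseteq> topspace X"
  by (auto simp: attr_region_def)

lemma attr_region_flow_add: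
  assumes "x \<in> \<Omega>" "0 \<le> t" "0 \<le> s"
  shows "(s, Phi t x) \<in> D \<and> Phi s (Phi t x) = Phi (s + t) x"
proof -
  have "(s + t, x) \<in> D" using attr_region_defined assms by auto
  then show ?thesis using semiflow assms unfolding local_semiflow_def by metis
qed

lemma attr_region_flow:
  assumes x: "x \<in> \<Omega>" and t: "0 \<le> t"
  shows "Phi t x \<in> \<Omega>"
proof -
  have defined: "\<forall>s\<ge>0. (s, Phi t x) \<in> D" using attr_region_flow_add x t by blast
  have "\<exists>t0>0. \<forall>s>t0. flow_image D Phi s {Phi t x} \<subseteq> V" if V: "nbhd_of X A V" for V
  proof -
    obtain t0 where t0: "t0 > 0" "\<forall>s>t0. flow_image D Phi s {x} \<subseteq> V"
      using x V unfolding attr_region_def sf_attracts_def by blast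
    have shift: "flow_image D Phi s {Phi t x} = flow_image D Phi (s + t) {x}" if "s > 0" for s
    proof -
      have "flow_image D Phi s {Phi t x} = {Phi (s + t) x}"
        using flow_image_singleton[of s "Phi t x"] attr_region_flow_add[OF x t, of s] that by simp
      also have "\<dots> = flow_image D Phi (s + t) {x}"
        using flow_image_singleton[OF attr_region_defined[OF x, of "s + t"]] t that by simp
      finally show ?thesis .
    qed
    have "flow_image D Phi s {Phi t x} \<subseteq> V" if "s > t0" for s
      using shift[of s] t0 that t by simp
    with t0(1) show ?thesis by blast
  qed
  moreover have "Phi t x \<in> topspace X"
    using local_semiflow_topspace[OF semiflow] attr_region_defined x t by blast
  ultimately show ?thesis using defined by (auto simp: attr_region_def sf_attracts_def)
qed

lemma z_continuous: "continuous_map (subtopology X \<Omega>) euclideanreal z"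
  and z_nonneg: "y \<in> \<Omega> \<Longrightarrow> 0 \<le> z y"
  and z_eq_0_iff: "y \<in> \<Omega> \<Longrightarrow> z y = 0 \<longleftrightarrow> y \<in> A"
  using K0 by (auto simp: K0_function_def)

lemma A_subset_U: "A \<subseteq> U"
  using closure_of_subset[OF closedin_subset[OF closed]] nbhd_N by (auto simp: nbhd_of_def)

lemma N_subset_attr_region: "N \<subseteq> \<Omega>"
proof
  fix y assume y: "y \<in> N"
  have "\<forall>t\<ge>0. (t, y) \<in> D" using attracts_N y by (auto simp: sf_attracts_def)
  moreover have "\<exists>t0>0. \<forall>t>t0. flow_image D Phi t {y} \<subseteq> V" if V: "nbhd_of X A V" for V
  proof -
    obtain t0 where "t0 > 0" "\<forall>t>t0. flow_image D Phi t N \<subseteq> V"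
      using attracts_N V unfolding sf_attracts_def by blast
    then show ?thesis using flow_image_mono[of "{y}" N] y by blast
  qed
  moreover have "y \<in> topspace X" using nbhd_N y by (auto simp: nbhd_of_def)
  ultimately show "y \<in> \<Omega>" by (auto simp: attr_region_def sf_attracts_def)
qed

lemma A_subset_attr_region: "A \<subseteq> \<Omega>"
  using A_subset_U interior_of_subset[of X N] N_subset_attr_region by blast

lemma continuous_map_flow:
  assumes "S \<subseteq> {0..}"
  shows "continuous_map (prod_topology (top_of_set S) (subtopology X \<Omega>)) X (\<lambda>w. Phi (fst w) (snd w))"
proof (rule local_semiflow_continuous_on_product[OF semiflow])
  show "S \<times> \<Omega> \<subseteq> D" using attr_region_defined assms by auto
qed

lemma continuous_map_z_flow:
  assumes "S \<subseteq> {0..}"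
  shows "continuous_map (prod_topology (top_of_set S) (subtopology X \<Omega>)) euclideanreal
           (\<lambda>w. z (Phi (fst w) (snd w)))"
proof -
  have "continuous_map (prod_topology (top_of_set S) (subtopology X \<Omega>)) (subtopology X \<Omega>)
          (\<lambda>w. Phi (fst w) (snd w))"
    using continuous_map_flow[OF assms] assms attr_region_flow
    by (auto simp: continuous_map_in_subtopology topspace_subtopology)
  from continuous_map_compose[OF this z_continuous] show ?thesis by (simp add: o_def)
qed

lemma continuous_on_z_orbit:
  assumes "y \<in> \<Omega>" "S \<subseteq> {0..}"
  shows "continuous_on S (\<lambda>t. z (Phi t y))"
proof -
  have "continuous_map (top_of_set S) (prod_topology (top_of_set S) (subtopology X \<Omega>)) (\<lambda>t. (t, y))"
    using assms attr_region_subset by (intro continuous_map_pairedI) auto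
  from continuous_map_compose[OF this continuous_map_z_flow[OF assms(2)]] show ?thesis
    by (simp add: o_def)
qed

lemma z_flow_uniformly_small_on_N:
  assumes e: "e > 0"
  obtains T where "T > 0" "\<And>y t. y \<in> N \<Longrightarrow> t > T \<Longrightarrow> z (Phi t y) < e"
proof -
  have "openin (subtopology X \<Omega>) {y \<in> topspace (subtopology X \<Omega>). z y \<in> {..<e}}"
    by (rule openin_continuous_map_preimage[OF z_continuous]) auto
  also have "{y \<in> topspace (subtopology X \<Omega>). z y \<in> {..<e}} = {y \<in> \<Omega>. z y < e}"
    using attr_region_subset by auto
  finally have "openin (subtopology X \<Omega>) {y \<in> \<Omega>. z y < e}" .
  then obtain V where V: "openin X V" "{y \<in> \<Omega>. z y < e} = V \<inter> \<Omega>"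
    unfolding openin_subtopology by blast
  have "A \<subseteq> {y \<in> \<Omega>. z y < e}" using A_subset_attr_region z_eq_0_iff e by fastforce
  then have "A \<subseteq> V" using V(2) by blast
  then have "nbhd_of X A (U \<inter> V)"
    using V(1) A_subset_U by (intro nbhd_of_openin[OF closed]) auto
  then obtain T where T: "T > 0" "\<forall>t>T. flow_image D Phi t N \<subseteq> U \<inter> V"
    using attracts_N unfolding sf_attracts_def by blast
  have "z (Phi t y) < e" if y: "y \<in> N" and t: "t > T" for y t
  proof -
    have "(t, y) \<in> D" using attr_region_defined N_subset_attr_region y t T(1) by auto
    then have "Phi t y \<in> flow_image D Phi t N" unfolding flow_image_def using y by blast
    then have "Phi t y \<in> V" using T(2) t by blast
    moreover have "Phi t y \<in> \<Omega>" using attr_region_flow N_subset_attr_region y t T(1) by auto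
    ultimately have "Phi t y \<in> {y \<in> \<Omega>. z y < e}" using V(2) by blast
    then show ?thesis by simp
  qed
  with T(1) show thesis by (rule that)
qed

text \<open>
  The points \<open>y\<close> with \<open>\<Phi> \<tau> y \<in> U\<close> form a neighbourhood of \<open>x\<close>, and their orbits all obey
  the decay bound for \<open>N\<close>.
\<close>
lemma z_flow_small_after_entering_U:
  assumes x: "x \<in> \<Omega>" and e: "e > 0"
  obtains \<tau> T where "0 \<le> \<tau>" "\<tau> \<le> T" "Phi \<tau> x \<in> U"
    "\<And>y t. y \<in> \<Omega> \<Longrightarrow> Phi \<tau> y \<in> N \<Longrightarrow> t > T \<Longrightarrow> z (Phi t y) < e"
proof -
  have "nbhd_of X A U" using A_subset_U by (intro nbhd_of_openin[OF closed]) auto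
  then obtain t0 where t0: "t0 > 0" "\<forall>s>t0. flow_image D Phi s {x} \<subseteq> U"
    using x by (auto simp: attr_region_def sf_attracts_def)
  define \<tau> where "\<tau> = t0 + 1"
  have \<tau>: "0 \<le> \<tau>" "Phi \<tau> x \<in> U"
    using t0 flow_image_singleton[OF attr_region_defined[OF x]] \<tau>_def by force+
  obtain T where T: "T > 0" "\<And>y t. y \<in> N \<Longrightarrow> t > T \<Longrightarrow> z (Phi t y) < e"
    using z_flow_uniformly_small_on_N e by blast
  have "z (Phi t y) < e" if y: "y \<in> \<Omega>" "Phi \<tau> y \<in> N" and t: "t > \<tau> + T" for y t
  proof -
    have "Phi (t - \<tau>) (Phi \<tau> y) = Phi t y"
      using attr_region_flow_add[OF y(1), of \<tau> "t - \<tau>"] \<tau> t T(1) by simp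
    then show ?thesis using T(2)[OF y(2), of "t - \<tau>"] t by simp
  qed
  then show thesis using \<tau> T(1) by (intro that[of \<tau> "\<tau> + T"]) auto
qed

lemma z_flow_small_eventually:
  assumes "x \<in> \<Omega>" "e > 0"
  obtains T where "0 \<le> T" "\<And>t. t > T \<Longrightarrow> z (Phi t x) < e"
proof -
  obtain \<tau> T where "0 \<le> \<tau>" "\<tau> \<le> T" "Phi \<tau> x \<in> U"
    and "\<And>y t. y \<in> \<Omega> \<Longrightarrow> Phi \<tau> y \<in> N \<Longrightarrow> t > T \<Longrightarrow> z (Phi t y) < e"
    using z_flow_small_after_entering_U[OF assms] by blast
  moreover have "Phi \<tau> x \<in> N" using \<open>Phi \<tau> x \<in> U\<close> interior_of_subset[of X N] by blast
  ultimately show thesis using assms(1) by (intro that[of T]) auto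
qed

lemma bdd_above_weighted_orbit:
  assumes y: "y \<in> \<Omega>"
  shows "bdd_above ((\<lambda>t. orbit_weight t * z (Phi t y)) ` {0..})"
proof -
  obtain T where T: "\<And>t. t > T \<Longrightarrow> z (Phi t y) < 1"
    using z_flow_small_eventually[OF y, of 1] by auto
  have "compact ((\<lambda>t. z (Phi t y)) ` {0..T})"
    using continuous_on_z_orbit[OF y, of "{0..T}"] by (intro compact_continuous_image) auto
  then obtain B where B: "\<forall>t\<in>{0..T}. norm (z (Phi t y)) \<le> B"
    using compact_imp_bounded bounded_iff by (metis (no_types, lifting) image_eqI)
  have "orbit_weight t * z (Phi t y) \<le> 2 * max B 1" if t: "t \<ge> 0" for t
  proof -
    have "z (Phi t y) \<le> max B 1"
    proof (cases "t \<le> T")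
      case True
      then show ?thesis using B t by force
    next
      case False
      then show ?thesis using T[of t] by simp
    qed
    then show ?thesis
      using orbit_weight_bounds[OF t] z_nonneg[OF attr_region_flow[OF y t]] by (intro mult_mono) auto
  qed
  then show ?thesis by (intro bdd_aboveI2) simp
qed

lemma weighted_orbit_le_L:
  assumes "y \<in> \<Omega>" "0 \<le> t"
  shows "orbit_weight t * z (Phi t y) \<le> L y"
  unfolding sup_weighted_orbit_def
  using bdd_above_weighted_orbit[OF assms(1)] assms(2) by (intro cSUP_upper) simp_all

lemma L_leI:
  assumes "\<And>t. 0 \<le> t \<Longrightarrow> orbit_weight t * z (Phi t y) \<le> c"
  shows "L y \<le> c"
  unfolding sup_weighted_orbit_def using assms by (intro cSUP_least) simp_all

lemma z_le_L:
  assumes "y \<in> \<Omega>"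
  shows "z y \<le> L y"
proof -
  have "Phi 0 y = y" using local_semiflow_0[OF semiflow] assms attr_region_subset by blast
  then show ?thesis using weighted_orbit_le_L[OF assms, of 0] by simp
qed

lemma L_nonneg: "y \<in> \<Omega> \<Longrightarrow> 0 \<le> L y"
  using z_le_L z_nonneg by (meson order_trans)

lemma L_eq_0_on_A:
  assumes "x \<in> A"
  shows "L x = 0"
proof -
  have x: "x \<in> \<Omega>" using assms A_subset_attr_region by blast
  have "orbit_weight t * z (Phi t x) \<le> 0" if t: "0 \<le> t" for t
  proof -
    have "Phi t x \<in> flow_image D Phi t A"
      unfolding flow_image_def using assms attr_region_defined[OF x t] by blast
    then have "Phi t x \<in> A" using invariant t unfolding sf_invariant_def by blast
    then have "z (Phi t x) = 0" using z_eq_0_iff A_subset_attr_region by blast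
    then show ?thesis by simp
  qed
  then show ?thesis using L_leI L_nonneg[OF x] by (meson order_antisym)
qed

lemma weighted_orbit_le_L_of_close:
  assumes u: "u \<in> \<Omega>" and v: "v \<in> \<Omega>" and t: "0 \<le> t"
    and near: "t \<le> T \<Longrightarrow> \<bar>z (Phi t u) - z (Phi t v)\<bar> < e"
    and far: "T < t \<Longrightarrow> z (Phi t u) < e"
  shows "orbit_weight t * z (Phi t u) \<le> L v + 2 * e"
proof (cases "t \<le> T")
  case True
  then have "z (Phi t u) \<le> z (Phi t v) + e" using near by linarith
  then have "orbit_weight t * z (Phi t u) \<le> orbit_weight t * z (Phi t v) + orbit_weight t * e"
    using orbit_weight_bounds[OF t] by (simp flip: distrib_left)
  also have "\<dots> \<le> L v + 2 * e"
    using weighted_orbit_le_L[OF v t] orbit_weight_bounds[OF t] near True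
    by (intro add_mono mult_right_mono) auto
  finally show ?thesis .
next
  case False
  then have "orbit_weight t * z (Phi t u) \<le> 2 * e"
    using far orbit_weight_bounds[OF t] z_nonneg attr_region_flow u t by (intro mult_mono) auto
  then show ?thesis using L_nonneg[OF v] by linarith
qed

text \<open>
  The tube lemma over the compact interval \<open>[0, T]\<close> (closedness of the projection \<open>snd\<close>)
  makes the orbits of nearby points \<open>e\<close>-close up to time \<open>T\<close>.
\<close>
lemma orbits_close_near:
  assumes x: "x \<in> \<Omega>" and e: "e > 0"
  obtains W T where "openin (subtopology X \<Omega>) W" "x \<in> W"
    "\<And>y t. y \<in> W \<Longrightarrow> 0 \<le> t \<Longrightarrow> t \<le> T \<Longrightarrow> \<bar>z (Phi t y) - z (Phi t x)\<bar> < e"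
    "\<And>y t. y \<in> W \<Longrightarrow> t > T \<Longrightarrow> z (Phi t y) < e"
proof -
  let ?Y = "subtopology X \<Omega>"
  obtain \<tau> T where \<tau>: "0 \<le> \<tau>" "\<tau> \<le> T" "Phi \<tau> x \<in> U"
    and tail: "\<And>y t. y \<in> \<Omega> \<Longrightarrow> Phi \<tau> y \<in> N \<Longrightarrow> t > T \<Longrightarrow> z (Phi t y) < e"
    using z_flow_small_after_entering_U[OF x e] by blast
  define P where "P = prod_topology (top_of_set {0..T}) ?Y"
  have z_flow: "continuous_map P euclideanreal (\<lambda>w. z (Phi (fst w) (snd w)))"
    using continuous_map_z_flow[of "{0..T}"] unfolding P_def by simp
  have "continuous_map P P (\<lambda>w. (fst w, x))"
    unfolding P_def using x attr_region_subset by (intro continuous_map_pairedI continuous_map_fst) auto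
  from continuous_map_compose[OF this z_flow]
  have "continuous_map P euclideanreal (\<lambda>w. z (Phi (fst w) x))" by (simp add: o_def)
  with z_flow have diff: "continuous_map P euclideanreal (\<lambda>w. \<bar>z (Phi (fst w) (snd w)) - z (Phi (fst w) x)\<bar>)"
    by (intro continuous_map_real_abs continuous_map_diff)
  define C where "C = {w \<in> topspace P. \<bar>z (Phi (fst w) (snd w)) - z (Phi (fst w) x)\<bar> \<in> {e..}}"
  have "closedin P C"
    unfolding C_def using diff by (rule closedin_continuous_map_preimage) (simp add: closed_closedin[symmetric])
  moreover have "compact_space (top_of_set {0..T})" by (rule compact_space_subtopology) simp
  ultimately have "closedin ?Y (snd ` C)"
    using closed_map_snd[of "top_of_set {0..T}" ?Y] unfolding closed_map_def P_def by blast
  moreover have "continuous_map ?Y X (Phi \<tau>)"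
  proof -
    have "continuous_map ?Y (prod_topology (top_of_set {\<tau>}) ?Y) (\<lambda>y. (\<tau>, y))"
      by (intro continuous_map_pairedI) simp_all
    from continuous_map_compose[OF this continuous_map_flow] show ?thesis
      using \<tau>(1) by (simp add: o_def)
  qed
  then have "openin ?Y {y \<in> topspace ?Y. Phi \<tau> y \<in> U}"
    by (rule openin_continuous_map_preimage) simp
  ultimately have "openin ?Y ({y \<in> topspace ?Y. Phi \<tau> y \<in> U} - snd ` C)"
    by (intro openin_diff)
  moreover have "x \<notin> snd ` C"
    using e unfolding C_def by auto
  then have "x \<in> {y \<in> topspace ?Y. Phi \<tau> y \<in> U} - snd ` C"
    using x attr_region_subset \<tau>(3) by auto
  moreover have "\<bar>z (Phi t y) - z (Phi t x)\<bar> < e"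
    if y: "y \<in> {y \<in> topspace ?Y. Phi \<tau> y \<in> U} - snd ` C" and t: "0 \<le> t" "t \<le> T" for y t
  proof (rule ccontr)
    assume "\<not> ?thesis"
    then have "(t, y) \<in> C" using y t unfolding C_def P_def by auto
    then show False using y by force
  qed
  moreover have "z (Phi t y) < e" if "y \<in> {y \<in> topspace ?Y. Phi \<tau> y \<in> U} - snd ` C" "t > T" for y t
    using that tail[of y t] interior_of_subset[of X N] by auto
  ultimately show thesis by (rule that)
qed

lemma L_continuous: "continuous_map (subtopology X \<Omega>) euclideanreal L"
proof (rule continuous_map_real_epsilon)
  fix x and \<epsilon> :: real
  assume x: "x \<in> topspace (subtopology X \<Omega>)" and \<epsilon>: "\<epsilon> > 0"
  then have x\<Omega>: "x \<in> \<Omega>" by simp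
  obtain W T where W: "openin (subtopology X \<Omega>) W" "x \<in> W"
    and near: "\<And>y t. y \<in> W \<Longrightarrow> 0 \<le> t \<Longrightarrow> t \<le> T \<Longrightarrow> \<bar>z (Phi t y) - z (Phi t x)\<bar> < \<epsilon> / 4"
    and far: "\<And>y t. y \<in> W \<Longrightarrow> t > T \<Longrightarrow> z (Phi t y) < \<epsilon> / 4"
    using orbits_close_near[OF x\<Omega>, of "\<epsilon> / 4"] \<epsilon> by auto
  have "\<bar>L y - L x\<bar> < \<epsilon>" if y: "y \<in> W" for y
  proof -
    have y\<Omega>: "y \<in> \<Omega>" using openin_subset[OF W(1)] y by auto
    have "L y \<le> L x + 2 * (\<epsilon> / 4)"
    proof (rule L_leI)
      fix t :: real assume t: "0 \<le> t"
      show "orbit_weight t * z (Phi t y) \<le> L x + 2 * (\<epsilon> / 4)"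
        by (rule weighted_orbit_le_L_of_close[OF y\<Omega> x\<Omega> t]) (use near[OF y t] far[OF y] in auto)
    qed
    moreover have "L x \<le> L y + 2 * (\<epsilon> / 4)"
    proof (rule L_leI)
      fix t :: real assume t: "0 \<le> t"
      show "orbit_weight t * z (Phi t x) \<le> L y + 2 * (\<epsilon> / 4)"
        by (rule weighted_orbit_le_L_of_close[OF x\<Omega> y\<Omega> t])
          (use near[OF y t] far[OF W(2)] in \<open>auto simp: abs_minus_commute\<close>)
    qed
    ultimately show ?thesis using \<epsilon> by linarith
  qed
  then show "\<exists>W. openin (subtopology X \<Omega>) W \<and> x \<in> W \<and> (\<forall>y\<in>W. \<bar>L y - L x\<bar> < \<epsilon>)"
    using W by blast
qed

lemma L_strict_decrease:
  assumes x: "x \<in> \<Omega>" and xA: "x \<notin> A" and s: "0 < s"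
  shows "L (Phi s x) < L x"
proof -
  have zx: "0 < z x" using z_nonneg[OF x] z_eq_0_iff[OF x] xA by linarith
  obtain T where T: "0 \<le> T" "\<And>t. t > T \<Longrightarrow> z (Phi t x) < z x / 4"
    using z_flow_small_eventually[OF x, of "z x / 4"] zx by auto
  obtain q where q: "0 \<le> q" "q < 1"
    and contraction: "\<And>t. 0 \<le> t \<Longrightarrow> t + s \<le> T \<Longrightarrow> orbit_weight t \<le> q * orbit_weight (t + s)"
    using orbit_weight_shift_contraction[OF s T(1)] by blast
  have "L (Phi s x) \<le> max (z x / 2) (q * L x)"
  proof (rule L_leI)
    fix t :: real assume t: "0 \<le> t"
    have flow: "Phi t (Phi s x) = Phi (t + s) x"
      using attr_region_flow_add[OF x, of s t] s t by simp
    have z_nonneg_ts: "0 \<le> z (Phi (t + s) x)"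
      using z_nonneg attr_region_flow x t s by simp
    show "orbit_weight t * z (Phi t (Phi s x)) \<le> max (z x / 2) (q * L x)"
    proof (cases "t + s \<le> T")
      case True
      have "orbit_weight t * z (Phi (t + s) x) \<le> q * (orbit_weight (t + s) * z (Phi (t + s) x))"
        using mult_right_mono[OF contraction[OF t True] z_nonneg_ts] by (simp add: mult.assoc)
      also have "\<dots> \<le> q * L x"
        using weighted_orbit_le_L[OF x, of "t + s"] t s q(1) by (intro mult_left_mono) auto
      finally show ?thesis using flow by simp
    next
      case False
      then have "orbit_weight t * z (Phi (t + s) x) \<le> 2 * (z x / 4)"
        using T(2)[of "t + s"] orbit_weight_bounds[OF t] z_nonneg_ts by (intro mult_mono) auto
      then show ?thesis using flow by simp
    qed
  qed
  moreover have "z x / 2 < L x" and "q * L x < L x"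
    using zx z_le_L[OF x] q(2) by auto
  ultimately show ?thesis by linarith
qed

lemma Lyapunov_function_L: "Lyapunov_function X D Phi A L"
  unfolding Lyapunov_function_def K0_function_def
proof (intro conjI ballI allI impI)
  fix x assume x: "x \<in> \<Omega>"
  show "L x = 0 \<longleftrightarrow> x \<in> A"
  proof
    assume "L x = 0"
    then have "z x = 0" using z_le_L[OF x] z_nonneg[OF x] by simp
    then show "x \<in> A" using z_eq_0_iff[OF x] by simp
  qed (rule L_eq_0_on_A)
qed (use L_continuous L_nonneg L_strict_decrease in auto)

end


lemma Lyapunov_function_above_K0:
  assumes "local_semiflow X D Phi" "is_attractor X D Phi A" "closedin X A" "K0_function X D Phi A z"
  obtains L where "Lyapunov_function X D Phi A L" "\<And>x. x \<in> attr_region X D Phi A \<Longrightarrow> z x \<le> L x"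
proof -
  obtain N where "nbhd_of X A N" "sf_attracts X D Phi A N" "sf_invariant D Phi A"
    using assms(2) unfolding is_attractor_def by blast
  then interpret attractor_with_K0 X D Phi A z N
    using assms by unfold_locales
  show thesis using Lyapunov_function_L z_le_L by (rule that)
qed

lemma K0_function_add:
  assumes "K0_function X D Phi A z" and f: "continuous_map X euclideanreal f"
    and "\<And>x. x \<in> topspace X \<Longrightarrow> 0 \<le> f x" and "\<And>x. x \<in> A \<Longrightarrow> f x = 0"
  shows "K0_function X D Phi A (\<lambda>x. z x + f x)"
  unfolding K0_function_def
proof (intro conjI ballI)
  show "continuous_map (subtopology X (attr_region X D Phi A)) euclideanreal (\<lambda>x. z x + f x)"
    using assms(1) continuous_map_from_subtopology[OF f]
    by (intro continuous_map_add) (auto simp: K0_function_def)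
  fix x assume x: "x \<in> attr_region X D Phi A"
  then have "x \<in> topspace X" by (simp add: attr_region_def)
  then show "0 \<le> z x + f x" and "z x + f x = 0 \<longleftrightarrow> x \<in> A"
    using assms x by (auto simp: K0_function_def add_nonneg_eq_0_iff)
qed

theorem theorem5p3:
  fixes X :: "'a topology" and D :: "(real \<times> 'a) set" and Phi :: "real \<Rightarrow> 'a \<Rightarrow> 'a"
    and A :: "'a set" and \<zeta> :: "'a \<Rightarrow> real"
  assumes "Hausdorff_space X"
    and "local_semiflow X D Phi"
    and "is_attractor X D Phi A"
    and "closedin X A"
    and "K0_function X D Phi A \<zeta>"
  shows "(\<exists>L. Lyapunov_function X D Phi A L) \<and>
         (normal_space X \<longrightarrow>
            (\<forall>K. closedin X K \<and> K \<subseteq> attr_region X D Phi A - A \<longrightarrow>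
               (\<exists>L. Lyapunov_function X D Phi A L \<and> (\<forall>x\<in>K. 1 \<le> L x))))"
proof (intro conjI impI allI)
  show "\<exists>L. Lyapunov_function X D Phi A L"
    using Lyapunov_function_above_K0[OF assms(2-5)] by blast
next
  fix K assume normal: "normal_space X" and K: "closedin X K \<and> K \<subseteq> attr_region X D Phi A - A"
  then have "disjnt A K" by (auto simp: disjnt_def)
  then obtain f :: "'a \<Rightarrow> real" where f: "continuous_map X (top_of_set {0..1}) f"
    "f ` A \<subseteq> {0}" "f ` K \<subseteq> {1}"
    using Urysohn_lemma[OF normal assms(4)] K by (metis zero_le_one)
  then have "K0_function X D Phi A (\<lambda>x. \<zeta> x + f x)"
    using assms(5) by (intro K0_function_add) (auto simp: continuous_map_in_subtopology)
  then obtain L where "Lyapunov_function X D Phi A L"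
    "\<And>x. x \<in> attr_region X D Phi A \<Longrightarrow> \<zeta> x + f x \<le> L x"
    using Lyapunov_function_above_K0[OF assms(2-4)] by blast
  moreover have "1 \<le> \<zeta> x + f x" if "x \<in> K" for x
    using that K f(3) assms(5) by (force simp: K0_function_def)
  ultimately show "\<exists>L. Lyapunov_function X D Phi A L \<and> (\<forall>x\<in>K. 1 \<le> L x)"
    using K by (blast intro: order_trans)
qed

end
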